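(* Let $N\ge 3$ and let $(a_i)_{i\in\mathbb{Z}_{2N}}$ and $(\bar a_i)_{i\in\mathbb{Z}_{2N}}$ be positive real numbers (indices taken modulo $2N$) satisfying, for all $n\in\mathbb{Z}_N$, $$\bar a_{2n-1}+\bar a_{2n}=a_{2n}+a_{2n+1},\qquad \bar a_{2n}\bar a_{2n+1}=a_{2n+1}a_{2n+2}.$$ For $1\le k\le N$ define $$h_k(a)=\sum_{\substack{1\le i_1\triangleleft i_2\triangleleft\cdots\triangleleft i_k\le 2N\\ (i_1,i_k)\neq(1,2N)}} a_{i_1}a_{i_2}\cdots a_{i_k},$$ and $h_{N+1}(a)=\prod_{i=1}^{2N}a_i$. Then $h_k(\bar a)=h_k(a)$ for all $1\le k\le N+1$.
   Context: For integers $i,j$, $i\triangleleft j$ means $i+1<j$. The sum in $h_k$ runs over index tuples $1\le i_1<\dots<i_k\le 2N$ with consecutive indices differing by at least $2$, excluding tuples with $i_1=1$ and $i_k=2N$ simultaneously. The displayed equations are the evolution equations of the discrete periodic Toda lattice, with $a_i=a_i^t$, $\bar a_i=a_i^{t+1}$. *)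

theory Defs
  imports Complex_Main
begin

text \<open>Index sets of h_k: strictly increasing tuples 1 <= i_1 < ... < i_k <= 2N with
  consecutive indices differing by at least 2, represented as k-element subsets of {1..2N}
  with no two elements adjacent, excluding those containing both 1 and 2N.\<close>
definition toda_index_sets :: "nat \<Rightarrow> nat \<Rightarrow> int set set" where
  "toda_index_sets N k =
     {S. S \<subseteq> {1..2 * int N} \<and> card S = k \<and>
         (\<forall>i\<in>S. \<forall>j\<in>S. i < j \<longrightarrow> i + 1 < j) \<and>
         \<not> (1 \<in> S \<and> 2 * int N \<in> S)}"

definition toda_h :: "nat \<Rightarrow> nat \<Rightarrow> (int \<Rightarrow> real) \<Rightarrow> real" where
  "toda_h N k a = (\<Sum>S\<in>toda_index_sets N k. \<Prod>i\<in>S. a i)"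

definition toda_h_top :: "nat \<Rightarrow> (int \<Rightarrow> real) \<Rightarrow> real" where
  "toda_h_top N a = (\<Prod>i\<in>{1..2 * int N}. a i)"

end

theory Submission
  imports Defs "HOL-Analysis.Determinants"
begin

text \<open>
  For weights w on the sites 1..m consider the 2x2 transfer matrix
  T(c) = [[1, c], [1, 0]], whose second state means "the current site is chosen".
  The entries of the ordered product T(w 1) ... T(w m) enumerate the sets of pairwise
  non-adjacent sites of {1..m}, weighted by the product of their weights and sorted by
  whether the first and the last site are chosen.  Hence for m = 2N the trace is the sum
  over the index sets of h_k, i.e. with w i = a i * x it is the generating polynomial
  of h_0(a), ..., h_2N(a) in x; at x = 1 the determinant is prod (- a i) = h_{N+1}(a).

  The discrete Toda equations say exactly that, with the lower triangular gauge matrices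
  G_n = [[1, 0], [1 - d_n, d_n]], d_n = a(2n+1) / abar(2n), the pair products intertwine:
  T(abar(2n-1)) T(abar(2n)) G_n = G_(n-1) T(a(2n)) T(a(2n+1)).  Telescoping over one
  period shows that the monodromy of abar is conjugate to the monodromy of a started
  at site 2, and a cyclic rotation moves the start back to site 1.  So trace and
  determinant agree for every x, and comparing coefficients of the trace polynomial
  gives h_k(abar) = h_k(a).
\<close>

section \<open>Ordered products of square matrices\<close>

fun chain_prod :: "(int \<Rightarrow> 'a::semiring_1^'n^'n) \<Rightarrow> int \<Rightarrow> nat \<Rightarrow> 'a^'n^'n" where
  "chain_prod f i 0 = mat 1"
| "chain_prod f i (Suc m) = f i ** chain_prod f (i + 1) m"

lemma chain_prod_append:
  "chain_prod f i (m + n) = chain_prod f i m ** chain_prod f (i + int m) n"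
  by (induction m arbitrary: i) (auto simp: matrix_mul_assoc add.assoc)

lemma chain_prod_snoc: "chain_prod f i (Suc m) = chain_prod f i m ** f (i + int m)"
  using chain_prod_append[of f i m 1] by simp

text \<open>Grouping consecutive factors into pairs, as the Toda map acts on pairs of sites.\<close>

lemma chain_prod_pairs:
  "chain_prod (\<lambda>n. f (2 * n + c) ** f (2 * n + c + 1)) i m = chain_prod f (2 * i + c) (2 * m)"
proof (induction m arbitrary: i)
  case (Suc m)
  have "chain_prod f (2 * i + c) (2 * Suc m) =
      f (2 * i + c) ** (f (2 * i + c + 1) ** chain_prod f (2 * (i + 1) + c) (2 * m))"
    by (simp add: algebra_simps)
  then show ?case using Suc by (simp add: matrix_mul_assoc)
qed simp

lemma chain_prod_intertwine:
  assumes "\<And>j. A j ** G j = G (j - 1) ** B j"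
  shows "chain_prod A i m ** G (i + int m - 1) = G (i - 1) ** chain_prod B i m"
proof (induction m arbitrary: i)
  case (Suc m)
  have "chain_prod A i (Suc m) ** G (i + int (Suc m) - 1)
      = A i ** (chain_prod A (i + 1) m ** G (i + 1 + int m - 1))"
    by (simp add: matrix_mul_assoc algebra_simps)
  also have "\<dots> = (A i ** G i) ** chain_prod B (i + 1) m"
    using Suc.IH[of "i + 1"] by (simp add: matrix_mul_assoc)
  also have "\<dots> = G (i - 1) ** chain_prod B i (Suc m)"
    using assms by (simp add: matrix_mul_assoc)
  finally show ?case .
qed simp

lemma det_chain_prod:
  fixes f :: "int \<Rightarrow> 'a::comm_ring_1^'n^'n"
  shows "det (chain_prod f i m) = (\<Prod>j\<in>{i..<i + int m}. det (f j))"
proof (induction m arbitrary: i)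
  case (Suc m)
  have "{i..<i + int (Suc m)} = insert i {i + 1..<i + 1 + int m}" by auto
  then show ?case using Suc by (simp add: det_mul)
qed simp

text \<open>For a sequence with f (i + m) = f i, starting the product of length m one step later
  is a cyclic rotation, which preserves trace and determinant.\<close>

lemma chain_prod_rotate:
  fixes f :: "int \<Rightarrow> 'a::comm_ring_1^'n^'n"
  assumes "f (i + int m) = f i"
  shows "trace (chain_prod f (i + 1) m) = trace (chain_prod f i m)
       \<and> det (chain_prod f (i + 1) m) = det (chain_prod f i m)"
proof (cases m)
  case (Suc k)
  have "chain_prod f (i + 1) m = chain_prod f (i + 1) k ** f i"
    using Suc chain_prod_snoc[of f "i + 1" k] assms by (simp add: add_ac)
  moreover have "chain_prod f i m = f i ** chain_prod f (i + 1) k" using Suc by simp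
  ultimately show ?thesis
    using trace_mul_sym[of "f i" "chain_prod f (i + 1) k"] by (simp add: det_mul mult.commute)
qed simp

lemma similar_trace_det:
  fixes X Y G :: "'a::field^'n^'n"
  assumes "X ** G = G ** Y" and "invertible G"
  shows "trace X = trace Y \<and> det X = det Y"
proof
  obtain H where GH: "G ** H = mat 1" and HG: "H ** G = mat 1"
    using assms(2) unfolding invertible_def by blast
  have "trace X = trace (X ** G ** H)" by (simp add: GH flip: matrix_mul_assoc)
  also have "\<dots> = trace (G ** (Y ** H))" by (simp add: assms(1) matrix_mul_assoc)
  also have "\<dots> = trace (Y ** H ** G)" by (rule trace_mul_sym)
  also have "\<dots> = trace Y" by (simp add: HG flip: matrix_mul_assoc)
  finally show "trace X = trace Y" .
  have "det X * det G = det G * det Y" using arg_cong[OF assms(1), of det] by (simp add: det_mul)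
  then show "det X = det Y" using assms(2) by (simp add: invertible_det_nz)
qed

section \<open>Transfer and gauge matrices\<close>

text \<open>Row index: previous site chosen (2) or not (1);
  column index: current site chosen (2) or not (1).  Two adjacent sites may not both
  be chosen, and choosing the current site contributes the factor c.\<close>

definition transfer :: "real \<Rightarrow> real^2^2" where
  "transfer c = (\<chi> i j. if j = 1 then 1 else if i = 1 then c else 0)"

definition gauge :: "real \<Rightarrow> real^2^2" where
  "gauge d = (\<chi> i j. if i = 1 then (if j = 1 then 1 else 0) else (if j = 1 then 1 - d else d))"

lemma det_transfer: "det (transfer c) = - c"
  by (simp add: det_2 transfer_def)

lemma invertible_gauge: "d \<noteq> 0 \<Longrightarrow> invertible (gauge d)"
  by (simp add: invertible_det_nz det_2 gauge_def)

text \<open>The key local identity: a pair of transfer matrices with weights b1, b2 is gauge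
  equivalent to the pair with weights p, q when b1 + b2 = p + q and b0 b1 = r p.
  This is the algebraic content of one step of the discrete Toda lattice.\<close>

lemma transfer_pair_gauge:
  fixes b0 b1 b2 p q r x :: real
  assumes "b1 + b2 = p + q" and "b0 * b1 = r * p" and "b0 \<noteq> 0" and "b2 \<noteq> 0"
  shows "transfer (b1 * x) ** transfer (b2 * x) ** gauge (q / b2)
       = gauge (r / b0) ** (transfer (p * x) ** transfer (q * x))"
proof -
  have b1: "b1 = r * p / b0" using assms(2,3) by (simp add: field_simps)
  have q: "q = r * p / b0 + b2 - p" using assms(1) b1 by simp
  show ?thesis
    using assms(3,4)
    by (simp add: vec_eq_iff forall_2 matrix_matrix_mult_def sum_2 transfer_def gauge_def
        b1 q field_simps)
qed

section \<open>Non-adjacent index sets and the entries of transfer products\<close>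

definition separated :: "int set \<Rightarrow> bool" where
  "separated S \<longleftrightarrow> (\<forall>i\<in>S. \<forall>j\<in>S. i < j \<longrightarrow> i + 1 < j)"

lemma separated_insert_max:
  assumes "\<forall>i\<in>S. i < a"
  shows "separated (insert a S) \<longleftrightarrow> separated S \<and> a - 1 \<notin> S"
  using assms unfolding separated_def by (smt (verit) insert_iff)

text \<open>Separated subsets of {1..m} whose last site is chosen iff t = 2 and which avoid site 1
  if s = 2 (a virtual chosen site 0).  These index the (s, t) entry of a transfer product.\<close>

definition endpoint_sets :: "nat \<Rightarrow> 2 \<Rightarrow> 2 \<Rightarrow> int set set" where
  "endpoint_sets m s t =
     {S. S \<subseteq> {1..int m} \<and> separated S \<and> (int m \<in> S \<longleftrightarrow> t = 2) \<and> (s = 2 \<longrightarrow> 1 \<notin> S)}"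

lemma finite_endpoint_sets: "finite (endpoint_sets m s t)"
  by (rule finite_subset[of _ "Pow {1..int m}"]) (auto simp: endpoint_sets_def)

lemma two_neq_one_iff: "(t::2) \<noteq> 1 \<longleftrightarrow> t = 2"
  using exhaust_2[of t] by auto

lemma endpoint_sets_one:
  "endpoint_sets 1 s t = (if t = 1 then {{}} else if s = 1 then {{1}} else {})"
  by (auto simp: endpoint_sets_def separated_def subset_singleton_iff two_neq_one_iff)

lemma atLeastAtMost_Suc_int: "{1..int (Suc m)} = insert (int (Suc m)) {1..int m}"
  by auto

lemma endpoint_sets_Suc_unchosen:
  assumes "m \<ge> 1"
  shows "endpoint_sets (Suc m) s 1 = endpoint_sets m s 1 \<union> endpoint_sets m s 2"
  using assms unfolding endpoint_sets_def atLeastAtMost_Suc_int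
  by (auto simp: subset_insert)

lemma endpoint_sets_Suc_chosen:
  assumes "m \<ge> 1"
  shows "endpoint_sets (Suc m) s 2 = insert (int (Suc m)) ` endpoint_sets m s 1"
proof
  show "endpoint_sets (Suc m) s 2 \<subseteq> insert (int (Suc m)) ` endpoint_sets m s 1"
  proof
    fix T assume T: "T \<in> endpoint_sets (Suc m) s 2"
    let ?S = "T - {int (Suc m)}"
    have "T = insert (int (Suc m)) ?S" using T by (auto simp: endpoint_sets_def)
    moreover have "\<forall>i\<in>?S. i < int (Suc m)" using T by (auto simp: endpoint_sets_def)
    ultimately have "?S \<in> endpoint_sets m s 1"
      using T separated_insert_max[of ?S "int (Suc m)"]
      by (auto simp: endpoint_sets_def subset_iff)
    then show "T \<in> insert (int (Suc m)) ` endpoint_sets m s 1"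
      using \<open>T = insert (int (Suc m)) ?S\<close> by blast
  qed
next
  show "insert (int (Suc m)) ` endpoint_sets m s 1 \<subseteq> endpoint_sets (Suc m) s 2"
  proof
    fix T assume "T \<in> insert (int (Suc m)) ` endpoint_sets m s 1"
    then obtain S where S: "S \<in> endpoint_sets m s 1" and T: "T = insert (int (Suc m)) S" by blast
    have "\<forall>i\<in>S. i < int (Suc m)" using S by (auto simp: endpoint_sets_def)
    then show "T \<in> endpoint_sets (Suc m) s 2"
      using S assms separated_insert_max[of S "int (Suc m)"] unfolding T
      by (auto simp: endpoint_sets_def subset_iff)
  qed
qed

lemma sum_prod_insert_image:
  fixes w :: "'a \<Rightarrow> 'b::comm_semiring_1"
  assumes "finite \<A>" and "\<forall>S\<in>\<A>. finite S \<and> a \<notin> S"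
  shows "(\<Sum>S\<in>insert a ` \<A>. \<Prod>i\<in>S. w i) = w a * (\<Sum>S\<in>\<A>. \<Prod>i\<in>S. w i)"
proof -
  have "inj_on (insert a) \<A>" using assms(2) by (intro inj_onI) (metis Diff_insert_absorb)
  then show ?thesis using assms by (simp add: sum.reindex sum_distrib_left)
qed

lemma transfer_chain_entry:
  fixes w :: "int \<Rightarrow> real"
  assumes "m \<ge> 1"
  shows "chain_prod (\<lambda>i. transfer (w i)) 1 m $ s $ t = (\<Sum>S\<in>endpoint_sets m s t. \<Prod>i\<in>S. w i)"
  using assms
proof (induction m arbitrary: t rule: nat_induct_at_least)
  case base
  show ?case using endpoint_sets_one[of s t] by (simp add: transfer_def two_neq_one_iff)
next
  case (Suc m)
  let ?T = "\<lambda>i. transfer (w i)"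
  have step: "chain_prod ?T 1 (Suc m) $ s $ t =
      chain_prod ?T 1 m $ s $ 1 * ?T (int (Suc m)) $ 1 $ t
    + chain_prod ?T 1 m $ s $ 2 * ?T (int (Suc m)) $ 2 $ t"
    by (simp only: chain_prod_snoc) (simp add: matrix_matrix_mult_def sum_2 add.commute)
  show ?case
  proof (cases "t = 1")
    case True
    have "endpoint_sets m s 1 \<inter> endpoint_sets m s 2 = {}" by (auto simp: endpoint_sets_def)
    then show ?thesis
      using True step Suc.IH endpoint_sets_Suc_unchosen[OF Suc.hyps]
      by (simp add: transfer_def sum.union_disjoint finite_endpoint_sets)
  next
    case False
    have "\<forall>S\<in>endpoint_sets m s 1. finite S \<and> int (Suc m) \<notin> S"
      by (auto simp: endpoint_sets_def finite_subset)
    then show ?thesis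
      using False step Suc.IH endpoint_sets_Suc_chosen[OF Suc.hyps]
      by (simp add: transfer_def two_neq_one_iff sum_prod_insert_image finite_endpoint_sets)
  qed
qed

text \<open>Separated subsets of {1..m} that do not contain both 1 and m, i.e. separated
  when the sites are arranged on a circle (for m \<ge> 2).\<close>

definition cyclic_sets :: "nat \<Rightarrow> int set set" where
  "cyclic_sets m = {S. S \<subseteq> {1..int m} \<and> separated S \<and> \<not> (1 \<in> S \<and> int m \<in> S)}"

text \<open>The trace of the monodromy sums over the cyclically separated sets: the diagonal
  entries (1,1) and (2,2) are exactly the sets not ending in m, resp. ending in m and
  avoiding 1.\<close>

lemma trace_transfer_chain:
  fixes w :: "int \<Rightarrow> real"
  assumes "m \<ge> 1"
  shows "trace (chain_prod (\<lambda>i. transfer (w i)) 1 m) = (\<Sum>S\<in>cyclic_sets m. \<Prod>i\<in>S. w i)"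
proof -
  have "endpoint_sets m 1 1 \<inter> endpoint_sets m 2 2 = {}" by (auto simp: endpoint_sets_def)
  moreover have "endpoint_sets m 1 1 \<union> endpoint_sets m 2 2 = cyclic_sets m"
    by (auto simp: endpoint_sets_def cyclic_sets_def)
  ultimately show ?thesis
    using assms by (simp add: trace_def sum_2 transfer_chain_entry finite_endpoint_sets
        flip: sum.union_disjoint)
qed

lemma toda_index_sets_cyclic: "toda_index_sets N k = {S \<in> cyclic_sets (2 * N). card S = k}"
  by (auto simp: toda_index_sets_def cyclic_sets_def separated_def)

lemma cyclic_sets_generating_function:
  fixes a :: "int \<Rightarrow> real"
  shows "(\<Sum>S\<in>cyclic_sets (2 * N). \<Prod>i\<in>S. a i * x) = (\<Sum>k\<le>2 * N. toda_h N k a * x ^ k)"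
proof -
  have fin: "finite (cyclic_sets (2 * N))"
    by (rule finite_subset[of _ "Pow {1..2 * int N}"]) (auto simp: cyclic_sets_def)
  have card: "card ` cyclic_sets (2 * N) \<subseteq> {..2 * N}"
  proof
    fix k assume "k \<in> card ` cyclic_sets (2 * N)"
    then obtain S where "S \<subseteq> {1..2 * int N}" "k = card S" by (auto simp: cyclic_sets_def)
    then show "k \<in> {..2 * N}" using card_mono[of "{1..2 * int N}" S] by simp
  qed
  have "(\<Sum>S\<in>cyclic_sets (2 * N). \<Prod>i\<in>S. a i * x)
      = (\<Sum>S\<in>cyclic_sets (2 * N). (\<Prod>i\<in>S. a i) * x ^ card S)"
    by (simp add: prod.distrib)
  also have "\<dots> = (\<Sum>k\<le>2 * N. \<Sum>S\<in>{S \<in> cyclic_sets (2 * N). card S = k}. (\<Prod>i\<in>S. a i) * x ^ card S)"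
    using sum.group[OF fin finite_atMost card, of "\<lambda>S. (\<Prod>i\<in>S. a i) * x ^ card S"] by simp
  also have "\<dots> = (\<Sum>k\<le>2 * N. toda_h N k a * x ^ k)"
    unfolding toda_h_def toda_index_sets_cyclic sum_distrib_right by simp
  finally show ?thesis .
qed

text \<open>The determinant of the monodromy is h_{N+1}, as (-1)^(2N) = 1.\<close>

lemma det_transfer_chain:
  fixes w :: "int \<Rightarrow> real"
  shows "det (chain_prod (\<lambda>i. transfer (w i)) 1 (2 * N)) = toda_h_top N w"
proof -
  have "{1..<1 + int (2 * N)} = {1..2 * int N}" by auto
  moreover have "card {1..2 * int N} = 2 * N" by simp
  ultimately show ?thesis
    by (simp add: det_chain_prod det_transfer prod_uminus toda_h_top_def)
qed

section \<open>The discrete periodic Toda lattice\<close>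

lemma toda_gauge_step:
  fixes a abar :: "int \<Rightarrow> real" and x :: real and j :: int
  assumes abar_nz: "\<forall>i. abar i \<noteq> 0"
    and sum_eq: "\<forall>n. abar (2*n - 1) + abar (2*n) = a (2*n) + a (2*n + 1)"
    and prod_eq: "\<forall>n. abar (2*n) * abar (2*n + 1) = a (2*n + 1) * a (2*n + 2)"
  shows "transfer (abar (2*j - 1) * x) ** transfer (abar (2*j) * x)
           ** gauge (a (2*j + 1) / abar (2*j))
       = gauge (a (2*(j - 1) + 1) / abar (2*(j - 1)))
           ** (transfer (a (2*j) * x) ** transfer (a (2*j + 1) * x))"
proof (rule transfer_pair_gauge)
  show "abar (2*j - 1) + abar (2*j) = a (2*j) + a (2*j + 1)" using sum_eq by blast
  show "abar (2*(j - 1)) * abar (2*j - 1) = a (2*(j - 1) + 1) * a (2*j)"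
    using prod_eq[rule_format, of "j - 1"] by (simp add: algebra_simps)
qed (use abar_nz in auto)

text \<open>Trace and determinant of the monodromy are conserved for every spectral parameter x:
  the monodromy of abar is conjugate to the monodromy of a started at site 2, which is a
  cyclic rotation of the one started at site 1.\<close>

lemma toda_transfer_invariants:
  fixes N :: nat and a abar :: "int \<Rightarrow> real" and x :: real
  assumes a_periodic: "\<forall>i. a (i + 2 * int N) = a i"
    and abar_periodic: "\<forall>i. abar (i + 2 * int N) = abar i"
    and a_nz: "\<forall>i. a i \<noteq> 0"
    and abar_nz: "\<forall>i. abar i \<noteq> 0"
    and sum_eq: "\<forall>n. abar (2*n - 1) + abar (2*n) = a (2*n) + a (2*n + 1)"
    and prod_eq: "\<forall>n. abar (2*n) * abar (2*n + 1) = a (2*n + 1) * a (2*n + 2)"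
  shows "trace (chain_prod (\<lambda>i. transfer (abar i * x)) 1 (2 * N))
           = trace (chain_prod (\<lambda>i. transfer (a i * x)) 1 (2 * N))
       \<and> det (chain_prod (\<lambda>i. transfer (abar i * x)) 1 (2 * N))
           = det (chain_prod (\<lambda>i. transfer (a i * x)) 1 (2 * N))"
proof -
  define Ta where "Ta = (\<lambda>i. transfer (a i * x))"
  define Tb where "Tb = (\<lambda>i. transfer (abar i * x))"
  define G where "G = (\<lambda>n. gauge (a (2*n + 1) / abar (2*n)))"
  have pair_step: "Tb (2*j + -1) ** Tb (2*j + -1 + 1) ** G j
      = G (j - 1) ** (Ta (2*j + 0) ** Ta (2*j + 0 + 1))" for j
    using toda_gauge_step[OF abar_nz sum_eq prod_eq, of j x] by (simp add: Ta_def Tb_def G_def)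
  have "chain_prod Tb 1 (2 * N) ** G (int N) = G 0 ** chain_prod Ta 2 (2 * N)"
    using chain_prod_intertwine[of "\<lambda>n. Tb (2*n + -1) ** Tb (2*n + -1 + 1)" G
        "\<lambda>n. Ta (2*n + 0) ** Ta (2*n + 0 + 1)", OF pair_step, of 1 N]
      chain_prod_pairs[of Tb "-1" 1 N] chain_prod_pairs[of Ta 0 1 N]
    by simp
  moreover have "G (int N) = G 0"
    using a_periodic[rule_format, of 1] abar_periodic[rule_format, of 0]
    by (simp add: G_def add.commute)
  moreover have "invertible (G 0)" using a_nz abar_nz by (simp add: G_def invertible_gauge)
  ultimately have "trace (chain_prod Tb 1 (2 * N)) = trace (chain_prod Ta 2 (2 * N))
      \<and> det (chain_prod Tb 1 (2 * N)) = det (chain_prod Ta 2 (2 * N))"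
    using similar_trace_det by metis
  moreover have "trace (chain_prod Ta 2 (2 * N)) = trace (chain_prod Ta 1 (2 * N))
      \<and> det (chain_prod Ta 2 (2 * N)) = det (chain_prod Ta 1 (2 * N))"
    using chain_prod_rotate[of Ta 1 "2 * N"] a_periodic by (simp add: Ta_def add.commute)
  ultimately show ?thesis by (simp add: Ta_def Tb_def)
qed

text \<open>The conserved quantities h_1, ..., h_{N+1} of the discrete periodic Toda lattice:
  compare coefficients of the conserved trace polynomial, and take the determinant at x = 1.\<close>

theorem mainTheorem2:
  fixes N :: nat and a abar :: "int \<Rightarrow> real"
  assumes "N \<ge> 3"
    and "\<forall>i. a (i + 2 * int N) = a i"
    and "\<forall>i. abar (i + 2 * int N) = abar i"
    and "\<forall>i. a i > 0"
    and "\<forall>i. abar i > 0"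
    and "\<forall>n::int. abar (2*n - 1) + abar (2*n) = a (2*n) + a (2*n + 1)"
    and "\<forall>n::int. abar (2*n) * abar (2*n + 1) = a (2*n + 1) * a (2*n + 2)"
  shows "(\<forall>k\<in>{1..N}. toda_h N k abar = toda_h N k a) \<and> toda_h_top N abar = toda_h_top N a"
proof -
  have sites: "2 * N \<ge> 1" using assms(1) by simp
  have "\<forall>i. a i \<noteq> 0" "\<forall>i. abar i \<noteq> 0" using assms(4,5) by (metis less_irrefl)+
  note invariants = toda_transfer_invariants[OF assms(2,3) this assms(6,7)]
  have trace_poly: "(\<Sum>k\<le>2 * N. toda_h N k abar * x ^ k) = (\<Sum>k\<le>2 * N. toda_h N k a * x ^ k)"
    for x
    using invariants[of x] trace_transfer_chain[OF sites]
    by (simp flip: cyclic_sets_generating_function)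
  have "\<forall>k\<le>2 * N. toda_h N k abar = toda_h N k a"
    using trace_poly polyfun_eq_coeffs[where c = "\<lambda>k. toda_h N k abar" and d = "\<lambda>k. toda_h N k a"]
    by blast
  moreover have "toda_h_top N abar = toda_h_top N a"
    using invariants[of 1] by (simp add: det_transfer_chain)
  ultimately show ?thesis by auto
qed

end
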